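(* Let $\alpha\in\mathbb{F}_q^*$ and let $\mathscr{C}\subseteq\mathbb{F}_q^n$ be a skew $\alpha$-cyclic code whose generator polynomial has positive degree. If $\mathscr{C}=\mathscr{C}^\perp$, then $n$ is even and $\alpha=\pm1$.
   Context: Let $\mathbb{F}_q$ be a finite field and $\theta$ a field automorphism of $\mathbb{F}_q$. For $\alpha\in\mathbb{F}_q^*$, a linear code $\mathscr{C}\subseteq\mathbb{F}_q^n$ is skew $\alpha$-cyclic if it is invariant under $\phi_{\alpha,\theta}(c_0,\dots,c_{n-1})=(\alpha\theta(c_{n-1}),\theta(c_0),\dots,\theta(c_{n-2}))$. Let $R=\mathbb{F}_q[x;\theta]$ be the skew polynomial ring with multiplication rule $xa=\theta(a)x$ for $a\in\mathbb{F}_q$. Identify $(a_0,\dots,a_{n-1})\in\mathbb{F}_q^n$ with the class of $\sum_i a_ix^i$ in the left $R$-module $R/R(x^n-\alpha)$. Under this identification a skew $\alpha$-cyclic code is a left $R$-submodule of the form $Rg/R(x^n-\alpha)$ for a unique monic $g\in R$ of minimal degree, which is a right divisor of $x^n-\alpha$ (the generator polynomial); the code has dimension $n-\deg g$. $\mathscr{C}^\perp$ denotes the dual code with respect to the standard bilinear form. *)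

theory Defs
  imports "HOL-Computational_Algebra.Polynomial"
begin

definition field_automorphism :: "('a::field \<Rightarrow> 'a) \<Rightarrow> bool" where
  "field_automorphism \<theta> \<longleftrightarrow> bij \<theta> \<and> (\<forall>a b. \<theta> (a + b) = \<theta> a + \<theta> b) \<and> (\<forall>a b. \<theta> (a * b) = \<theta> a * \<theta> b)"

definition linear_code :: "nat \<Rightarrow> 'a::field list set \<Rightarrow> bool" where
  "linear_code n C \<longleftrightarrow> C \<subseteq> {v. length v = n} \<and> replicate n 0 \<in> C
     \<and> (\<forall>u\<in>C. \<forall>v\<in>C. map2 (+) u v \<in> C) \<and> (\<forall>a. \<forall>u\<in>C. map (\<lambda>x. a * x) u \<in> C)"

definition skew_shift :: "'a::field \<Rightarrow> ('a \<Rightarrow> 'a) \<Rightarrow> 'a list \<Rightarrow> 'a list" where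
  "skew_shift \<alpha> \<theta> c = (case c of [] \<Rightarrow> [] | _ \<Rightarrow> (\<alpha> * \<theta> (last c)) # map \<theta> (butlast c))"

definition skew_cyclic_code :: "nat \<Rightarrow> 'a::field \<Rightarrow> ('a \<Rightarrow> 'a) \<Rightarrow> 'a list set \<Rightarrow> bool" where
  "skew_cyclic_code n \<alpha> \<theta> C \<longleftrightarrow> linear_code n C \<and> (\<forall>c\<in>C. skew_shift \<alpha> \<theta> c \<in> C)"

definition dual_code :: "nat \<Rightarrow> 'a::field list set \<Rightarrow> 'a list set" where
  "dual_code n C = {v. length v = n \<and> (\<forall>c\<in>C. (\<Sum>i<n. v ! i * c ! i) = 0)}"

text \<open>Multiplication in the skew polynomial ring F[x;theta], with x a = theta(a) x,
  skew polynomials being represented by their (left) coefficients.\<close>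
definition skew_mult :: "('a::field \<Rightarrow> 'a) \<Rightarrow> 'a poly \<Rightarrow> 'a poly \<Rightarrow> 'a poly" where
  "skew_mult \<theta> p q = (\<Sum>i\<le>degree p. \<Sum>j\<le>degree q. monom (coeff p i * (\<theta> ^^ i) (coeff q j)) (i + j))"

text \<open>The left ideal of R consisting of all skew polynomials whose class in
  R/R(x^n - alpha) corresponds to a codeword of C
  (vector (a_0,...,a_{n-1}) identified with sum a_i x^i).\<close>
definition code_ideal :: "nat \<Rightarrow> 'a::field \<Rightarrow> ('a \<Rightarrow> 'a) \<Rightarrow> 'a list set \<Rightarrow> 'a poly set" where
  "code_ideal n \<alpha> \<theta> C = {p. \<exists>c\<in>C. \<exists>h. p = Poly c + skew_mult \<theta> h (monom 1 n - [:\<alpha>:])}"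

definition skew_generator :: "nat \<Rightarrow> 'a::field \<Rightarrow> ('a \<Rightarrow> 'a) \<Rightarrow> 'a list set \<Rightarrow> 'a poly \<Rightarrow> bool" where
  "skew_generator n \<alpha> \<theta> C g \<longleftrightarrow> lead_coeff g = 1 \<and> g \<in> code_ideal n \<alpha> \<theta> C
     \<and> (\<forall>p\<in>code_ideal n \<alpha> \<theta> C. p \<noteq> 0 \<longrightarrow> degree g \<le> degree p)"

end

(*
  Shortening at the first coordinate shows, by induction on n, that a linear code C of
  length n over F_q satisfies |C| = q^k and |C^\<perp>| = q^(n-k) for some k: either the first
  column of C vanishes, or C contains a word 1 # b, and in both cases C and C^\<perp> are
  in explicit bijection with products of F_q and the shortened code or its dual.
  Hence a self-dual code has n = 2k.

  For \<alpha>, take c \<in> C: both c and its skew shift are self-orthogonal.  Applying the field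
  automorphism \<theta> to c \<cdot> c = 0 and comparing with the shifted sum leaves only the last
  coordinate, (\<alpha>^2 - 1) \<theta>(c_(n-1))^2 = 0.  The last coordinate cannot vanish on all of C,
  since the unit vector e_(n-1) would then lie in C^\<perp> = C; so \<alpha>^2 = 1.  For n = 0 the
  modulus x^0 - \<alpha> = 1 - \<alpha> lies in the code ideal, and a generator of positive degree
  forces \<alpha> = 1.
*)
theory Submission
  imports Defs
begin

definition shortened_code :: "'a::zero list set \<Rightarrow> 'a list set" where
  "shortened_code C = {w. 0 # w \<in> C}"

lemma sum_lessThan_Suc_Cons_nth:
  "(\<Sum>i<Suc n. (y # u) ! i * (x # w) ! i) = y * x + (\<Sum>i<n. u ! i * w ! i)"
  by (subst sum.lessThan_Suc_shift) simp

lemma length_Suc_conv_Cons: "length c = Suc n \<Longrightarrow> \<exists>x t. c = x # t \<and> length t = n"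
  by (cases c) auto

lemma linear_code_shortened_code:
  assumes "linear_code (Suc n) C"
  shows "linear_code n (shortened_code C)"
proof -
  have "map2 (+) (0 # u) (0 # v) \<in> C" if "0 # u \<in> C" "0 # v \<in> C" for u v
    using assms that unfolding linear_code_def by blast
  moreover have "map (\<lambda>x. a * x) (0 # u) \<in> C" if "0 # u \<in> C" for a u
    using assms that unfolding linear_code_def by blast
  ultimately show ?thesis
    using assms unfolding linear_code_def shortened_code_def by auto
qed

lemma Cons_dual_code_shortened_code:
  assumes "y # u \<in> dual_code (Suc n) C"
  shows "u \<in> dual_code n (shortened_code C)"
  unfolding dual_code_def shortened_code_def
proof (intro CollectI conjI ballI)
  show "length u = n" using assms unfolding dual_code_def by simp
  fix w assume "w \<in> {w. 0 # w \<in> C}"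
  then have "(\<Sum>i<Suc n. (y # u) ! i * (0 # w) ! i) = 0"
    using assms unfolding dual_code_def by blast
  then show "(\<Sum>i<n. u ! i * w ! i) = 0"
    by (simp only: sum_lessThan_Suc_Cons_nth) simp
qed

lemma code_eq_image_zero_column:
  assumes "C \<subseteq> {v. length v = Suc n}" and "\<forall>c\<in>C. hd c = 0"
  shows "C = Cons 0 ` shortened_code C"
proof
  show "C \<subseteq> Cons 0 ` shortened_code C"
  proof
    fix c assume "c \<in> C"
    with assms obtain t where "c = 0 # t" by (cases c) auto
    with \<open>c \<in> C\<close> show "c \<in> Cons 0 ` shortened_code C"
      unfolding shortened_code_def by auto
  qed
qed (auto simp: shortened_code_def)

lemma dual_code_eq_image_zero_column:
  assumes "C \<subseteq> {v. length v = Suc n}" and "\<forall>c\<in>C. hd c = 0"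
  shows "dual_code (Suc n) C = (\<lambda>(y, u). y # u) ` (UNIV \<times> dual_code n (shortened_code C))"
proof (intro equalityI subsetI)
  fix v assume v: "v \<in> dual_code (Suc n) C"
  then obtain y u where "v = y # u"
    using length_Suc_conv_Cons unfolding dual_code_def by blast
  with v show "v \<in> (\<lambda>(y, u). y # u) ` (UNIV \<times> dual_code n (shortened_code C))"
    using Cons_dual_code_shortened_code by blast
next
  fix v assume "v \<in> (\<lambda>(y, u). y # u) ` (UNIV \<times> dual_code n (shortened_code C))"
  then obtain y u where v: "v = y # u" "u \<in> dual_code n (shortened_code C)" by auto
  show "v \<in> dual_code (Suc n) C"
    unfolding dual_code_def
  proof (intro CollectI conjI ballI)
    show "length v = Suc n" using v unfolding dual_code_def by simp
    fix c assume "c \<in> C"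
    then obtain w where "c = 0 # w" "w \<in> shortened_code C"
      using code_eq_image_zero_column[OF assms] by auto
    with v show "(\<Sum>i<Suc n. v ! i * c ! i) = 0"
      by (simp only: sum_lessThan_Suc_Cons_nth) (simp add: dual_code_def)
  qed
qed

context
  fixes n :: nat and C :: "'a::field list set" and b :: "'a list"
  assumes lin: "linear_code (Suc n) C" and pivot: "1 # b \<in> C"
begin

private lemma length_pivot: "length b = n"
  using lin pivot unfolding linear_code_def by auto

private lemma shortened_code_reduce:
  assumes "x # t \<in> C"
  shows "map2 (+) t (map (\<lambda>z. - x * z) b) \<in> shortened_code C"
proof -
  have "map (\<lambda>z. - x * z) (1 # b) \<in> C" using lin pivot unfolding linear_code_def by blast
  with assms have "map2 (+) (x # t) (map (\<lambda>z. - x * z) (1 # b)) \<in> C"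
    using lin unfolding linear_code_def by blast
  then show ?thesis unfolding shortened_code_def by simp
qed

lemma code_eq_image_pivot:
  defines "f \<equiv> \<lambda>(x, w). x # map2 (+) (map (\<lambda>z. x * z) b) w"
  shows "C = f ` (UNIV \<times> shortened_code C)" and "inj_on f (UNIV \<times> shortened_code C)"
proof -
  have len: "length w = n" if "w \<in> shortened_code C" for w
    using lin that unfolding linear_code_def shortened_code_def by auto
  show "C = f ` (UNIV \<times> shortened_code C)"
  proof (intro equalityI subsetI)
    fix c assume "c \<in> C"
    then obtain x t where c: "c = x # t" "length t = n"
      using lin length_Suc_conv_Cons unfolding linear_code_def by blast
    let ?w = "map2 (+) t (map (\<lambda>z. - x * z) b)"
    have "f (x, ?w) = c"
      unfolding f_def c by (auto intro!: nth_equalityI simp: c length_pivot)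
    moreover have "?w \<in> shortened_code C"
      using shortened_code_reduce \<open>c \<in> C\<close> c by simp
    ultimately show "c \<in> f ` (UNIV \<times> shortened_code C)" by force
  next
    fix c assume "c \<in> f ` (UNIV \<times> shortened_code C)"
    then obtain x w where c: "c = f (x, w)" "0 # w \<in> C"
      unfolding shortened_code_def by auto
    have "map (\<lambda>z. x * z) (1 # b) \<in> C" using lin pivot unfolding linear_code_def by blast
    with c(2) have "map2 (+) (map (\<lambda>z. x * z) (1 # b)) (0 # w) \<in> C"
      using lin unfolding linear_code_def by blast
    then show "c \<in> C" unfolding c f_def by simp
  qed
  show "inj_on f (UNIV \<times> shortened_code C)"
  proof (rule inj_onI, clarsimp)
    fix x w x' w'
    assume w: "w \<in> shortened_code C" "w' \<in> shortened_code C" and eq: "f (x, w) = f (x', w')"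
    then have "x = x'" unfolding f_def by simp
    have "w = w'"
    proof (rule nth_equalityI)
      show "length w = length w'" using w len by simp
      fix i assume "i < length w"
      have "map2 (+) (map (\<lambda>z. x * z) b) w ! i = map2 (+) (map (\<lambda>z. x * z) b) w' ! i"
        using eq \<open>x = x'\<close> unfolding f_def by simp
      with \<open>i < length w\<close> w len show "w ! i = w' ! i" by (simp add: length_pivot)
    qed
    with \<open>x = x'\<close> show "x = x' \<and> w = w'" by simp
  qed
qed

lemma dual_code_eq_image_pivot:
  "dual_code (Suc n) C = (\<lambda>u. - (\<Sum>i<n. u ! i * b ! i) # u) ` dual_code n (shortened_code C)"
proof (intro equalityI subsetI)
  fix v assume v: "v \<in> dual_code (Suc n) C"
  then obtain y u where vu: "v = y # u"
    using length_Suc_conv_Cons unfolding dual_code_def by blast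
  have "(\<Sum>i<Suc n. (y # u) ! i * (1 # b) ! i) = 0"
    using v pivot unfolding vu dual_code_def by blast
  then have "y * 1 + (\<Sum>i<n. u ! i * b ! i) = 0"
    by (simp only: sum_lessThan_Suc_Cons_nth)
  then have "y = - (\<Sum>i<n. u ! i * b ! i)" by (simp add: eq_neg_iff_add_eq_0)
  with v vu Cons_dual_code_shortened_code
  show "v \<in> (\<lambda>u. - (\<Sum>i<n. u ! i * b ! i) # u) ` dual_code n (shortened_code C)" by blast
next
  fix v assume "v \<in> (\<lambda>u. - (\<Sum>i<n. u ! i * b ! i) # u) ` dual_code n (shortened_code C)"
  then obtain u where v: "v = - (\<Sum>i<n. u ! i * b ! i) # u"
    and u: "u \<in> dual_code n (shortened_code C)" by auto
  have len_u: "length u = n" using u unfolding dual_code_def by simp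
  show "v \<in> dual_code (Suc n) C"
    unfolding dual_code_def
  proof (intro CollectI conjI ballI)
    show "length v = Suc n" using v len_u by simp
    fix c assume "c \<in> C"
    then obtain x t where c: "c = x # t" "length t = n"
      using lin length_Suc_conv_Cons unfolding linear_code_def by blast
    have "(\<Sum>i<n. u ! i * map2 (+) t (map (\<lambda>z. - x * z) b) ! i) = 0"
      using u shortened_code_reduce \<open>c \<in> C\<close> c unfolding dual_code_def by blast
    also have "(\<Sum>i<n. u ! i * map2 (+) t (map (\<lambda>z. - x * z) b) ! i)
        = (\<Sum>i<n. u ! i * t ! i - x * (u ! i * b ! i))"
      by (rule sum.cong) (auto simp: c length_pivot algebra_simps)
    finally have "(\<Sum>i<n. u ! i * t ! i) = x * (\<Sum>i<n. u ! i * b ! i)"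
      by (simp add: sum_subtractf sum_distrib_left)
    then show "(\<Sum>i<Suc n. v ! i * c ! i) = 0"
      unfolding v c sum_lessThan_Suc_Cons_nth by (simp add: algebra_simps)
  qed
qed

end

lemma card_linear_code_dual_code:
  fixes C :: "'a::{finite,field} list set"
  assumes "linear_code n C"
  shows "\<exists>k\<le>n. card C = card (UNIV :: 'a set) ^ k
    \<and> card (dual_code n C) = card (UNIV :: 'a set) ^ (n - k)"
  using assms
proof (induction n arbitrary: C)
  case 0
  then have "C = {[]}" unfolding linear_code_def by auto
  moreover have "dual_code 0 C = {[]}" unfolding dual_code_def by auto
  ultimately show ?case by simp
next
  case (Suc n)
  from Suc.IH[OF linear_code_shortened_code[OF Suc.prems]] obtain k where k: "k \<le> n"
    "card (shortened_code C) = card (UNIV :: 'a set) ^ k"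
    "card (dual_code n (shortened_code C)) = card (UNIV :: 'a set) ^ (n - k)" by blast
  have C_len: "C \<subseteq> {v. length v = Suc n}" using Suc.prems unfolding linear_code_def by blast
  show ?case
  proof (cases "\<forall>c\<in>C. hd c = 0")
    case True
    have "card C = card (UNIV :: 'a set) ^ k"
      using k by (subst code_eq_image_zero_column[OF C_len True]) (simp add: card_image)
    moreover have "card (dual_code (Suc n) C) = card (UNIV :: 'a set) ^ (Suc n - k)"
      using k by (subst dual_code_eq_image_zero_column[OF C_len True], subst card_image)
        (auto simp: inj_on_def card_cartesian_product Suc_diff_le)
    ultimately show ?thesis using k by (intro exI[of _ k]) simp
  next
    case False
    then obtain a0 a where a: "a0 # a \<in> C" "a0 \<noteq> 0"
      using C_len length_Suc_conv_Cons by fastforce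
    then have "map (\<lambda>x. inverse a0 * x) (a0 # a) \<in> C"
      using Suc.prems unfolding linear_code_def by blast
    with a have pivot: "1 # map (\<lambda>x. inverse a0 * x) a \<in> C" by simp
    note image = code_eq_image_pivot[OF Suc.prems pivot]
    have "card C = card ((UNIV :: 'a set) \<times> shortened_code C)"
      using trans[OF arg_cong[where f = card, OF image(1)] card_image[OF image(2)]] .
    then have "card C = card (UNIV :: 'a set) ^ Suc k"
      using k by (simp add: card_cartesian_product)
    moreover have "card (dual_code (Suc n) C) = card (UNIV :: 'a set) ^ (Suc n - Suc k)"
      using k by (subst dual_code_eq_image_pivot[OF Suc.prems pivot], subst card_image)
        (auto simp: inj_on_def)
    ultimately show ?thesis using k by (intro exI[of _ "Suc k"]) simp
  qed
qed

lemma self_dual_code_even_length: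
  fixes C :: "'a::{finite,field} list set"
  assumes "linear_code n C" and "C = dual_code n C"
  shows "even n"
proof -
  obtain k where k: "k \<le> n" "card C = card (UNIV :: 'a set) ^ k"
    "card (dual_code n C) = card (UNIV :: 'a set) ^ (n - k)"
    using card_linear_code_dual_code[OF assms(1)] by blast
  have "card {0::'a, 1} \<le> card (UNIV :: 'a set)" by (rule card_mono) simp_all
  then have "1 < card (UNIV :: 'a set)" by simp
  moreover have "card (UNIV :: 'a set) ^ k = card (UNIV :: 'a set) ^ (n - k)"
    using k assms(2) by simp
  ultimately have "k = n - k" by simp
  with k show ?thesis by presburger
qed

lemma self_dual_code_self_orthogonal:
  "C = dual_code n C \<Longrightarrow> c \<in> C \<Longrightarrow> (\<Sum>i<n. c ! i * c ! i) = 0"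
  unfolding dual_code_def by blast

lemma self_dual_code_coordinate_nonzero:
  assumes self_dual: "C = dual_code n C" and "i < n"
  shows "\<exists>c\<in>C. c ! i \<noteq> 0"
proof (rule ccontr)
  assume "\<not> ?thesis"
  then have zero: "c ! i = 0" if "c \<in> C" for c using that by blast
  define e :: "'a list" where "e = (replicate n 0)[i := 1]"
  have "e \<in> dual_code n C"
    unfolding dual_code_def
  proof (intro CollectI conjI ballI)
    show "length e = n" unfolding e_def by simp
    fix c assume "c \<in> C"
    have "(\<Sum>j<n. e ! j * c ! j) = (\<Sum>j<n. if j = i then c ! i else 0)"
      by (rule sum.cong) (auto simp: e_def)
    also have "\<dots> = 0" using zero[OF \<open>c \<in> C\<close>] by simp
    finally show "(\<Sum>j<n. e ! j * c ! j) = 0" .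
  qed
  with self_dual zero[of e] \<open>i < n\<close> show False unfolding e_def by simp
qed

lemma field_automorphism_0: "field_automorphism \<theta> \<Longrightarrow> \<theta> 0 = 0"
  unfolding field_automorphism_def by (metis add_cancel_right_right add_0)

lemma field_automorphism_eq_0_iff: "field_automorphism \<theta> \<Longrightarrow> \<theta> x = 0 \<longleftrightarrow> x = 0"
  using field_automorphism_0[of \<theta>] unfolding field_automorphism_def bij_def inj_def by metis

lemma field_automorphism_sum:
  "field_automorphism \<theta> \<Longrightarrow> \<theta> (sum f A) = (\<Sum>i\<in>A. \<theta> (f i))"
  by (induction A rule: infinite_finite_induct)
    (auto simp: field_automorphism_0 field_automorphism_def)

lemma skew_shift_length_Suc:
  "length c = Suc m \<Longrightarrow> skew_shift \<alpha> \<theta> c = \<alpha> * \<theta> (c ! m) # map \<theta> (butlast c)"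
  unfolding skew_shift_def by (cases c) (auto simp: last_conv_nth)

lemma self_dual_skew_cyclic_code_last_coordinate:
  assumes \<theta>: "field_automorphism \<theta>"
    and cyclic: "skew_cyclic_code (Suc m) \<alpha> \<theta> C" and self_dual: "C = dual_code (Suc m) C"
    and "c \<in> C"
  shows "\<alpha>\<^sup>2 = 1 \<or> c ! m = 0"
proof -
  have len: "length c = Suc m"
    using cyclic \<open>c \<in> C\<close> unfolding skew_cyclic_code_def linear_code_def by auto
  have "skew_shift \<alpha> \<theta> c \<in> C" using cyclic \<open>c \<in> C\<close> unfolding skew_cyclic_code_def by blast
  from self_dual_code_self_orthogonal[OF self_dual this]
  have shifted: "(\<alpha> * \<theta> (c ! m)) * (\<alpha> * \<theta> (c ! m)) + (\<Sum>i<m. \<theta> (c ! i) * \<theta> (c ! i)) = 0"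
    unfolding skew_shift_length_Suc[OF len]
    by (subst (asm) sum.lessThan_Suc_shift) (auto simp: len nth_butlast intro!: sum.cong)
  have "\<theta> (\<Sum>i<Suc m. c ! i * c ! i) = 0"
    using self_dual_code_self_orthogonal[OF self_dual \<open>c \<in> C\<close>] field_automorphism_0[OF \<theta>] by simp
  then have "(\<Sum>i<m. \<theta> (c ! i) * \<theta> (c ! i)) + \<theta> (c ! m) * \<theta> (c ! m) = 0"
    using \<theta> unfolding field_automorphism_sum[OF \<theta>] by (simp add: field_automorphism_def)
  with shifted have "(\<alpha> * \<theta> (c ! m)) * (\<alpha> * \<theta> (c ! m)) = \<theta> (c ! m) * \<theta> (c ! m)"
    by (metis add.commute add_left_cancel)
  then have "(\<alpha>\<^sup>2 - 1) * (\<theta> (c ! m) * \<theta> (c ! m)) = 0"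
    by (simp add: algebra_simps power2_eq_square)
  then show ?thesis using field_automorphism_eq_0_iff[OF \<theta>] by simp
qed

lemma skew_generator_length_0:
  assumes "skew_generator 0 \<alpha> \<theta> C g" and "[] \<in> C" and "0 < degree g"
  shows "\<alpha> = 1"
proof (rule ccontr)
  assume "\<alpha> \<noteq> 1"
  have "skew_mult \<theta> 1 (monom 1 0 - [:\<alpha>:]) = [:1 - \<alpha>:]"
    by (simp add: skew_mult_def monom_0)
  then have "[:1 - \<alpha>:] \<in> code_ideal 0 \<alpha> \<theta> C"
    unfolding code_ideal_def using \<open>[] \<in> C\<close> by (auto intro!: bexI[of _ "[]"] exI[of _ 1])
  moreover have "[:1 - \<alpha>:] \<noteq> 0" using \<open>\<alpha> \<noteq> 1\<close> by simp
  ultimately have "degree g \<le> 0" using assms(1) unfolding skew_generator_def by fastforce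
  with \<open>0 < degree g\<close> show False by simp
qed

theorem mainTheorem3:
  fixes \<theta> :: "'a::{finite,field} \<Rightarrow> 'a" and \<alpha> :: 'a and n :: nat
    and C :: "'a list set" and g :: "'a poly"
  assumes "field_automorphism \<theta>"
    and "\<alpha> \<noteq> 0"
    and "skew_cyclic_code n \<alpha> \<theta> C"
    and "skew_generator n \<alpha> \<theta> C g"
    and "0 < degree g"
    and "C = dual_code n C"
  shows "even n \<and> (\<alpha> = 1 \<or> \<alpha> = -1)"
proof
  have lin: "linear_code n C" using assms(3) unfolding skew_cyclic_code_def by blast
  then show "even n" using self_dual_code_even_length assms(6) by blast
  show "\<alpha> = 1 \<or> \<alpha> = -1"
  proof (cases n)
    case 0
    with lin have "[] \<in> C" unfolding linear_code_def by auto
    with 0 assms(4,5) show ?thesis using skew_generator_length_0 by blast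
  next
    case (Suc m)
    then obtain c where "c \<in> C" "c ! m \<noteq> 0"
      using self_dual_code_coordinate_nonzero[OF assms(6)] by blast
    with Suc assms(1,3,6) have "\<alpha>\<^sup>2 = 1"
      using self_dual_skew_cyclic_code_last_coordinate by blast
    then show ?thesis by (simp add: power2_eq_1_iff)
  qed
qed

end
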